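(* Let $m\ge1$, $k\ge1$, $r>0$ and let $F:\mathbb{R}^{m+1}\to\mathbb{R}^{n+1}$ be a harmonic form of degree $k$ (each component is a harmonic homogeneous polynomial of degree $k$, i.e. $\Delta^0F=0$) with $|F(\bar x)|^2=r^2|\bar x|^{2k}$ for all $\bar x$, so that $F$ restricts to a map $\varphi:\mathbb{S}^m\to\mathbb{S}^n(r)$. Then at every point of $\mathbb{S}^m$, $$\Delta^0\big(|d^0F|^2\big)=-2r^2k(k-1)(m+2k-1)(m+2k-3),$$ $$|\nabla^0 d^0F|^2=r^2k(k-1)\big(m^2-4m+3+4k(m-2)+4k^2\big).$$
   Context: $\mathbb{S}^m$ is the unit sphere in $\mathbb{R}^{m+1}$ and $\mathbb{S}^n(r)$ the sphere of radius $r$ centred at $0$ in $\mathbb{R}^{n+1}$. Operators on $\mathbb{R}^{m+1}$: $\Delta^0 f=-\sum_i\partial^2 f/\partial(x^i)^2$ (applied componentwise to vector functions); $|d^0F|^2=\sum_{i=1}^{m+1}|\partial F/\partial x^i|^2$; $|\nabla^0d^0F|^2=\sum_{i,j=1}^{m+1}|\partial^2F/\partial x^i\partial x^j|^2$. *)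

theory Defs
  imports "HOL-Analysis.Analysis"
begin

definition pd :: "'m::finite \<Rightarrow> (real^'m \<Rightarrow> real) \<Rightarrow> real^'m \<Rightarrow> real" where
  "pd i f x = deriv (\<lambda>t. f (x + t *\<^sub>R axis i 1)) 0"

definition lap0 :: "(real^'m::finite \<Rightarrow> real) \<Rightarrow> real^'m \<Rightarrow> real" where
  "lap0 f x = - (\<Sum>i\<in>UNIV. pd i (pd i f) x)"

definition homog_poly :: "nat \<Rightarrow> (real^'m::finite \<Rightarrow> real) \<Rightarrow> bool" where
  "homog_poly k f \<longleftrightarrow> (\<exists>c :: ('m \<Rightarrow> nat) \<Rightarrow> real. \<forall>x.
     f x = (\<Sum>\<alpha>\<in>{\<alpha>. sum \<alpha> UNIV = k}. c \<alpha> * (\<Prod>i\<in>UNIV. (x$i) ^ \<alpha> i)))"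

definition harmonic_form :: "nat \<Rightarrow> (real^'m::finite \<Rightarrow> real^'n::finite) \<Rightarrow> bool" where
  "harmonic_form k F \<longleftrightarrow>
     (\<forall>j. homog_poly k (\<lambda>x. F x $ j) \<and> (\<forall>x. lap0 (\<lambda>y. F y $ j) x = 0))"

definition dF_sq :: "(real^'m::finite \<Rightarrow> real^'n::finite) \<Rightarrow> real^'m \<Rightarrow> real" where
  "dF_sq F x = (\<Sum>i\<in>UNIV. \<Sum>j\<in>UNIV. (pd i (\<lambda>y. F y $ j) x)\<^sup>2)"

definition hessF_sq :: "(real^'m::finite \<Rightarrow> real^'n::finite) \<Rightarrow> real^'m \<Rightarrow> real" where
  "hessF_sq F x = (\<Sum>i\<in>UNIV. \<Sum>l\<in>UNIV. \<Sum>j\<in>UNIV. (pd i (pd l (\<lambda>y. F y $ j)) x)\<^sup>2)"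

end

theory Submission
  imports Defs
begin

(* Write laplacian for the Laplacian sum_i d^2/d(x^i)^2, so that Delta^0 = - laplacian.
   By the product rule, laplacian (sum_j f_j^2) = 2 sum_j |grad f_j|^2 when every f_j is
   harmonic, and laplacian |x|^(2n) = 2n(m+2n-1) |x|^(2n-2). Applying this to
   |F|^2 = r^2 |x|^(2k) gives |d^0F|^2 = r^2 k(m+2k-1) |x|^(2k-2). The first partial
   derivatives of F are again harmonic polynomials, so the same identity gives
   laplacian |d^0F|^2 = 2 |nabla^0 d^0F|^2, and evaluating laplacian |x|^(2k-2) on the unit
   sphere yields both formulas. *)

lemma pd_eqI:
  "((\<lambda>t. f (x + t *\<^sub>R axis i 1)) has_real_derivative D) (at 0) \<Longrightarrow> pd i f x = D"
  by (simp add: pd_def DERIV_imp_deriv)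

lemma has_real_derivative_pdI:
  "((\<lambda>t. f (x + t *\<^sub>R axis i 1)) has_real_derivative D) (at 0) \<Longrightarrow>
   ((\<lambda>t. f (x + t *\<^sub>R axis i 1)) has_real_derivative pd i f x) (at 0)"
  by (simp add: pd_eqI)

lemma has_real_derivative_linear_line:
  assumes "bounded_linear f"
  shows "((\<lambda>t. f (x + t *\<^sub>R a)) has_real_derivative f a) (at t)"
proof -
  interpret bounded_linear f by (fact assms)
  have "(\<lambda>t. f (x + t *\<^sub>R a)) = (\<lambda>t. f x + t * f a)"
    by (simp add: add scaleR)
  then show ?thesis by (auto intro!: derivative_eq_intros)
qed

lemma pd_bounded_linear: "bounded_linear f \<Longrightarrow> pd i f = (\<lambda>x. f (axis i 1))"
  by (rule ext, rule pd_eqI, rule has_real_derivative_linear_line)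

lemma has_real_derivative_pd:
  assumes "real_polynomial_function f"
  shows "((\<lambda>t. f (x + t *\<^sub>R axis i 1)) has_real_derivative pd i f x) (at 0)"
  using assms
proof (induction arbitrary: x)
  case (linear f)
  then show ?case by (rule has_real_derivative_pdI[OF has_real_derivative_linear_line])
next
  case (const c)
  show ?case by (rule has_real_derivative_pdI[OF DERIV_const])
next
  case (add f g)
  show ?case by (rule has_real_derivative_pdI[OF DERIV_add[OF add.IH]])
next
  case (mult f g)
  show ?case by (rule has_real_derivative_pdI[OF DERIV_mult[OF mult.IH]])
qed

context
  fixes f g :: "real^'m::finite \<Rightarrow> real"
  assumes f: "real_polynomial_function f" and g: "real_polynomial_function g"
begin

lemma pd_add: "pd i (\<lambda>x. f x + g x) = (\<lambda>x. pd i f x + pd i g x)"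
  by (rule ext, rule pd_eqI, intro DERIV_add has_real_derivative_pd f g)

lemma pd_mult: "pd i (\<lambda>x. f x * g x) = (\<lambda>x. pd i f x * g x + f x * pd i g x)"
proof
  fix x
  have "((\<lambda>t. f (x + t *\<^sub>R axis i 1) * g (x + t *\<^sub>R axis i 1)) has_real_derivative
      pd i f x * g x + f x * pd i g x) (at 0)"
    using DERIV_mult[OF has_real_derivative_pd[OF f, of x i] has_real_derivative_pd[OF g, of x i]]
    by (simp add: mult.commute)
  then show "pd i (\<lambda>x. f x * g x) x = pd i f x * g x + f x * pd i g x"
    by (rule pd_eqI)
qed

end

lemma pd_const [simp]: "pd i (\<lambda>x. c) = (\<lambda>x. 0)"
  by (rule ext, rule pd_eqI, rule DERIV_const)

lemma pd_component [simp]: "pd i (\<lambda>x. x $ l) = (\<lambda>x. if l = i then 1 else 0)"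
  by (simp add: pd_bounded_linear bounded_linear_vec_nth axis_def)

lemma real_polynomial_function_component [simp]: "real_polynomial_function (\<lambda>x. x $ i)"
  by (intro real_polynomial_function.intros(1) bounded_linear_vec_nth)

declare real_polynomial_function.intros(2-4) [simp]
  real_polynomial_function_power [simp]

lemma real_polynomial_function_pd [simp]:
  "real_polynomial_function f \<Longrightarrow> real_polynomial_function (pd i f)"
proof (induction rule: real_polynomial_function.induct)
  case (linear f)
  then show ?case by (simp add: pd_bounded_linear)
qed (auto simp: pd_add pd_mult)

lemma pd_sum:
  assumes "finite A" and "\<And>a. a \<in> A \<Longrightarrow> real_polynomial_function (f a)"
  shows "pd i (\<lambda>x. \<Sum>a\<in>A. f a x) = (\<lambda>x. \<Sum>a\<in>A. pd i (f a) x)"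
  using assms
proof (induction A rule: finite_induct)
  case (insert a A)
  then have "real_polynomial_function (\<lambda>x. \<Sum>b\<in>A. f b x)"
    by (intro real_polynomial_function_sum) auto
  with insert show ?case by (simp add: pd_add)
qed simp

lemma pd_power:
  assumes "real_polynomial_function f"
  shows "pd i (\<lambda>x. f x ^ n) = (\<lambda>x. real n * f x ^ (n - 1) * pd i f x)"
proof (induction n)
  case (Suc n)
  have "pd i (\<lambda>x. f x ^ Suc n) =
      (\<lambda>x. pd i f x * f x ^ n + f x * (real n * f x ^ (n - 1) * pd i f x))"
    using assms by (simp add: pd_mult Suc.IH)
  also have "\<dots> = (\<lambda>x. real (Suc n) * f x ^ n * pd i f x)"
    by (rule ext, cases n) (simp_all add: algebra_simps)
  finally show ?case by simp
qed simp

lemma pd_commute: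
  "real_polynomial_function f \<Longrightarrow> pd i (pd l f) = pd l (pd i f)"
proof (induction rule: real_polynomial_function.induct)
  case (linear f)
  then show ?case by (simp add: pd_bounded_linear)
qed (auto simp: pd_add pd_mult algebra_simps)

definition laplacian :: "(real^'m::finite \<Rightarrow> real) \<Rightarrow> real^'m \<Rightarrow> real" where
  "laplacian f x = (\<Sum>l\<in>UNIV. pd l (pd l f) x)"

lemma lap0_eq_neg_laplacian: "lap0 f x = - laplacian f x"
  by (simp add: lap0_def laplacian_def)

lemma laplacian_const [simp]: "laplacian (\<lambda>x. c) x = 0"
  by (simp add: laplacian_def)

lemma laplacian_cmult:
  "real_polynomial_function f \<Longrightarrow> laplacian (\<lambda>x. c * f x) x = c * laplacian f x"
  by (simp add: laplacian_def pd_mult sum_distrib_left)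

lemma laplacian_mult:
  assumes "real_polynomial_function f" and "real_polynomial_function g"
  shows "laplacian (\<lambda>x. f x * g x) x =
    laplacian f x * g x + 2 * (\<Sum>l\<in>UNIV. pd l f x * pd l g x) + f x * laplacian g x"
  using assms
  by (simp add: laplacian_def pd_mult pd_add sum.distrib sum_distrib_left sum_distrib_right algebra_simps)

lemma laplacian_sum:
  assumes "finite A" and "\<And>a. a \<in> A \<Longrightarrow> real_polynomial_function (f a)"
  shows "laplacian (\<lambda>x. \<Sum>a\<in>A. f a x) x = (\<Sum>a\<in>A. laplacian (f a) x)"
  using assms by (simp add: laplacian_def pd_sum sum.swap[of _ A])

lemma laplacian_pd:
  assumes "real_polynomial_function f"
  shows "laplacian (pd i f) x = pd i (laplacian f) x"
proof -
  have "laplacian (pd i f) x = (\<Sum>l\<in>UNIV. pd i (pd l (pd l f)) x)"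
    unfolding laplacian_def using assms by (simp add: pd_commute)
  also have "\<dots> = pd i (laplacian f) x"
    using assms by (simp add: laplacian_def[abs_def] pd_sum)
  finally show ?thesis .
qed

lemma laplacian_sum_squares_harmonic:
  assumes "finite J"
    and "\<And>j. j \<in> J \<Longrightarrow> real_polynomial_function (f j)"
    and "\<And>j x. j \<in> J \<Longrightarrow> laplacian (f j) x = 0"
  shows "laplacian (\<lambda>x. \<Sum>j\<in>J. (f j x)\<^sup>2) x = 2 * (\<Sum>j\<in>J. \<Sum>l\<in>UNIV. (pd l (f j) x)\<^sup>2)"
proof -
  have "laplacian (\<lambda>x. \<Sum>j\<in>J. (f j x)\<^sup>2) x = (\<Sum>j\<in>J. laplacian (\<lambda>x. f j x * f j x) x)"
    using assms by (simp add: laplacian_sum power2_eq_square)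
  also have "\<dots> = (\<Sum>j\<in>J. 2 * (\<Sum>l\<in>UNIV. (pd l (f j) x)\<^sup>2))"
    using assms by (simp add: laplacian_mult power2_eq_square)
  finally show ?thesis by (simp add: sum_distrib_left)
qed

lemma norm_power_even_eq_sum:
  fixes x :: "real^'m::finite"
  shows "norm x ^ (2 * n) = (\<Sum>i\<in>UNIV. (x $ i)\<^sup>2) ^ n"
  unfolding power_mult power2_norm_eq_inner by (simp add: inner_vec_def power2_eq_square)

lemma real_polynomial_function_sum_squares:
  "real_polynomial_function (\<lambda>x::real^'m::finite. \<Sum>i\<in>UNIV. (x $ i)\<^sup>2)"
  by (intro real_polynomial_function_sum) auto

lemma real_polynomial_function_norm_power:
  "real_polynomial_function (\<lambda>x::real^'m::finite. norm x ^ (2 * n))"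
  unfolding norm_power_even_eq_sum
  by (rule real_polynomial_function_power[OF real_polynomial_function_sum_squares])

lemma laplacian_sum_squares_power:
  fixes x :: "real^'m::finite"
  defines "S \<equiv> \<lambda>x::real^'m. \<Sum>i\<in>UNIV. (x $ i)\<^sup>2"
  shows "laplacian (\<lambda>x. S x ^ Suc q) x = 2 * (real q + 1) * (real CARD('m) + 2 * real q) * S x ^ q"
proof -
  have S: "real_polynomial_function S"
    unfolding S_def by (rule real_polynomial_function_sum_squares)
  have pd_S: "pd l S = (\<lambda>x. 2 * x $ l)" for l
    unfolding S_def by (simp add: pd_sum pd_power if_distrib cong: if_cong)
  have "pd l (\<lambda>x. S x ^ Suc q) = (\<lambda>x. real (Suc q) * S x ^ q * (2 * x $ l))" for l
    by (simp only: pd_power[OF S] pd_S diff_Suc_1)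
  then have "pd l (pd l (\<lambda>x. S x ^ Suc q)) x =
      (real q + 1) * (4 * real q * S x ^ (q - 1) * (x $ l)\<^sup>2 + 2 * S x ^ q)" for l
    using S by (simp add: pd_power pd_mult pd_S) (simp add: power2_eq_square algebra_simps)
  then have "laplacian (\<lambda>x. S x ^ Suc q) x =
      (real q + 1) * (4 * real q * S x ^ (q - 1) * S x + 2 * real CARD('m) * S x ^ q)"
    by (simp add: laplacian_def sum.distrib sum_distrib_left[symmetric] S_def)
  also have "\<dots> = 2 * (real q + 1) * (real CARD('m) + 2 * real q) * S x ^ q"
    by (cases q) (simp_all add: algebra_simps)
  finally show ?thesis .
qed

lemma laplacian_norm_power:
  fixes x :: "real^'m::finite"
  shows "laplacian (\<lambda>x. norm x ^ (2 * n)) x =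
    2 * real n * (real CARD('m) + 2 * real n - 2) * norm x ^ (2 * n - 2)"
proof (cases n)
  case (Suc q)
  have "(\<lambda>x. norm x ^ (2 * n)) = (\<lambda>x::real^'m. (\<Sum>i\<in>UNIV. (x $ i)\<^sup>2) ^ Suc q)"
    unfolding Suc norm_power_even_eq_sum ..
  moreover have "norm x ^ (2 * n - 2) = (\<Sum>i\<in>UNIV. (x $ i)\<^sup>2) ^ q"
    using norm_power_even_eq_sum[of x q] by (simp add: Suc)
  ultimately show ?thesis
    using laplacian_sum_squares_power[of q x] by (simp add: Suc)
qed simp

lemma finite_multi_indices_sum_eq: "finite {\<alpha> :: 'm::finite \<Rightarrow> nat. sum \<alpha> UNIV = k}"
proof (rule finite_subset)
  show "{\<alpha>. sum \<alpha> UNIV = k} \<subseteq> {\<alpha> :: 'm \<Rightarrow> nat. \<forall>i. \<alpha> i \<le> k}"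
  proof (intro subsetI CollectI allI)
    fix \<alpha> :: "'m \<Rightarrow> nat" and i
    assume "\<alpha> \<in> {\<alpha>. sum \<alpha> UNIV = k}"
    moreover have "\<alpha> i \<le> sum \<alpha> UNIV"
      by (rule member_le_sum) auto
    ultimately show "\<alpha> i \<le> k"
      by simp
  qed
  have "finite {\<alpha> :: 'm \<Rightarrow> nat. \<forall>i. (i \<in> UNIV \<longrightarrow> \<alpha> i \<in> {..k}) \<and> (i \<notin> UNIV \<longrightarrow> \<alpha> i = 0)}"
    by (rule finite_set_of_finite_funs) auto
  then show "finite {\<alpha> :: 'm \<Rightarrow> nat. \<forall>i. \<alpha> i \<le> k}"
    by simp
qed

lemma real_polynomial_function_homog_poly:
  assumes "homog_poly k f"
  shows "real_polynomial_function f"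
proof -
  obtain c where "\<And>x. f x = (\<Sum>\<alpha>\<in>{\<alpha>. sum \<alpha> UNIV = k}. c \<alpha> * (\<Prod>i\<in>UNIV. (x $ i) ^ \<alpha> i))"
    using assms unfolding homog_poly_def by blast
  then have "f = (\<lambda>x. \<Sum>\<alpha>\<in>{\<alpha>. sum \<alpha> UNIV = k}. c \<alpha> * (\<Prod>i\<in>UNIV. (x $ i) ^ \<alpha> i))"
    by blast
  then show ?thesis
    by (simp add: real_polynomial_function_sum real_polynomial_function_prod finite_multi_indices_sum_eq)
qed

lemma harmonic_form_component:
  assumes "harmonic_form k F"
  shows "real_polynomial_function (\<lambda>x. F x $ j)" and "laplacian (\<lambda>x. F x $ j) x = 0"
  using assms real_polynomial_function_homog_poly
  by (auto simp: harmonic_form_def lap0_eq_neg_laplacian)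

lemma laplacian_norm_square_harmonic_form:
  assumes "harmonic_form k F"
  shows "laplacian (\<lambda>x. (norm (F x))\<^sup>2) x = 2 * dF_sq F x"
proof -
  have "laplacian (\<lambda>x. (norm (F x))\<^sup>2) x = laplacian (\<lambda>x. \<Sum>j\<in>UNIV. (F x $ j)\<^sup>2) x"
    by (simp add: norm_power_even_eq_sum[of _ 1, simplified])
  also have "\<dots> = 2 * (\<Sum>j\<in>UNIV. \<Sum>i\<in>UNIV. (pd i (\<lambda>x. F x $ j) x)\<^sup>2)"
    using harmonic_form_component[OF assms] by (intro laplacian_sum_squares_harmonic) auto
  also have "\<dots> = 2 * dF_sq F x"
    unfolding dF_sq_def by (subst sum.swap) (rule refl)
  finally show ?thesis .
qed

lemma laplacian_dF_sq_harmonic_form: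
  assumes "harmonic_form k F"
  shows "laplacian (dF_sq F) x = 2 * hessF_sq F x"
proof -
  note F = harmonic_form_component[OF assms]
  have harmonic: "laplacian (\<lambda>x. F x $ j) = (\<lambda>x. 0)" for j
    using F(2) by blast
  have "laplacian (dF_sq F) x = (\<Sum>i\<in>UNIV. laplacian (\<lambda>x. \<Sum>j\<in>UNIV. (pd i (\<lambda>x. F x $ j) x)\<^sup>2) x)"
    unfolding dF_sq_def[abs_def] using F by (intro laplacian_sum) auto
  also have "\<dots> = (\<Sum>i\<in>UNIV. 2 * (\<Sum>j\<in>UNIV. \<Sum>l\<in>UNIV. (pd l (pd i (\<lambda>x. F x $ j)) x)\<^sup>2))"
    using F by (intro sum.cong refl laplacian_sum_squares_harmonic) (auto simp: laplacian_pd harmonic)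
  also have "\<dots> = 2 * (\<Sum>i\<in>UNIV. \<Sum>j\<in>UNIV. \<Sum>l\<in>UNIV. (pd i (pd l (\<lambda>x. F x $ j)) x)\<^sup>2)"
    using F by (simp add: pd_commute sum_distrib_left)
  also have "\<dots> = 2 * hessF_sq F x"
    unfolding hessF_sq_def by (rule arg_cong[where f = "(*) 2"], rule sum.cong[OF refl], rule sum.swap)
  finally show ?thesis .
qed

lemma dF_sq_harmonic_form_sphere:
  fixes F :: "real^'m::finite \<Rightarrow> real^'n::finite"
  assumes "harmonic_form k F" and "\<And>x. (norm (F x))\<^sup>2 = r\<^sup>2 * norm x ^ (2 * k)"
  shows "dF_sq F x = r\<^sup>2 * real k * (real CARD('m) + 2 * real k - 2) * norm x ^ (2 * k - 2)"
proof -
  have "2 * dF_sq F x = laplacian (\<lambda>x. r\<^sup>2 * norm x ^ (2 * k)) x"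
    using laplacian_norm_square_harmonic_form[OF assms(1)] assms(2) by simp
  also have "\<dots> = r\<^sup>2 * laplacian (\<lambda>x. norm x ^ (2 * k)) x"
    by (simp add: laplacian_cmult real_polynomial_function_norm_power)
  also have "\<dots> = r\<^sup>2 * (2 * real k * (real CARD('m) + 2 * real k - 2) * norm x ^ (2 * k - 2))"
    by (simp only: laplacian_norm_power)
  finally show ?thesis
    by (simp add: algebra_simps)
qed

theorem mainTheorem2:
  fixes F :: "real^'m::finite \<Rightarrow> real^'n::finite" and k :: nat and r :: real and m :: real
  assumes m_def: "m = real CARD('m) - 1"
    and m_ge: "m \<ge> 1"
    and k_ge: "k \<ge> 1"
    and r_pos: "r > 0"
    and harm: "harmonic_form k F"
    and sph: "\<And>x. (norm (F x))\<^sup>2 = r\<^sup>2 * (norm x) ^ (2 * k)"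
  shows "\<forall>x::real^'m. norm x = 1 \<longrightarrow>
           lap0 (dF_sq F) x = - 2 * r\<^sup>2 * real k * (real k - 1) * (m + 2 * real k - 1) * (m + 2 * real k - 3)
         \<and> hessF_sq F x = r\<^sup>2 * real k * (real k - 1) *
              (m\<^sup>2 - 4 * m + 3 + 4 * real k * (m - 2) + 4 * (real k)\<^sup>2)"
proof (intro allI impI)
  fix x :: "real^'m"
  assume x: "norm x = 1"
  define C where "C = r\<^sup>2 * real k * (m + 2 * real k - 1)"
  have "dF_sq F = (\<lambda>x. C * norm x ^ (2 * (k - 1)))"
    using dF_sq_harmonic_form_sphere[OF harm sph] by (auto simp: C_def m_def right_diff_distrib')
  then have "laplacian (dF_sq F) x = 2 * C * (real k - 1) * (m + 2 * real k - 3)"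
    using k_ge x
    by (simp add: laplacian_cmult real_polynomial_function_norm_power laplacian_norm_power m_def of_nat_diff)
  then show "lap0 (dF_sq F) x = - 2 * r\<^sup>2 * real k * (real k - 1) * (m + 2 * real k - 1) * (m + 2 * real k - 3)
         \<and> hessF_sq F x = r\<^sup>2 * real k * (real k - 1) *
              (m\<^sup>2 - 4 * m + 3 + 4 * real k * (m - 2) + 4 * (real k)\<^sup>2)"
    using laplacian_dF_sq_harmonic_form[OF harm, of x]
    by (simp add: lap0_eq_neg_laplacian C_def power2_eq_square algebra_simps)
qed

end
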